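(* Suppose the weights $w^{(1)},w^{(2)}:\mathbb N_0\to\mathbb C$ satisfy the discrete Pearson equations $\theta(k+1)w^{(a)}(k+1)=\sigma^{(a)}(k)w^{(a)}(k)$ for all $k\in\mathbb N_0$ and $a\in\{1,2\}$, where $\theta,\sigma^{(1)},\sigma^{(2)}$ are polynomials with $\theta(0)=0$. Then the moment matrix satisfies \[ \theta(\Lambda)\mathscr M=L\,\mathscr M\left(L^{(1)}\sigma^{(1)}(\Lambda^{(1)})+L^{(2)}\sigma^{(2)}(\Lambda^{(2)})\right)^\top. \]
   Context: Let $X(x)=(1,x,x^2,\dots)^\top$, $X^{(1)}(x)=(1,0,x,0,x^2,0,\dots)^\top$, $X^{(2)}(x)=(0,1,0,x,0,x^2,\dots)^\top$. The moment matrix is the semi-infinite matrix $\mathscr M=\sum_{k=0}^\infty X(k)\big(w^{(1)}(k)X^{(1)}(k)+w^{(2)}(k)X^{(2)}(k)\big)^\top$ (all series assumed absolutely convergent). $\Lambda$ is the semi-infinite matrix with ones on the first superdiagonal and zeros elsewhere; $I^{(1)}=\operatorname{diag}(1,0,1,0,\dots)$, $I^{(2)}=\operatorname{diag}(0,1,0,1,\dots)$, $\Lambda^{(a)}=\Lambda^2I^{(a)}$. $L$ is the lower triangular Pascal matrix, $L_{n,m}=\binom nm$ for $n\ge m$ and $0$ otherwise (indices from $0$). For $a\in\{1,2\}$, $L^{(a)}$ is the semi-infinite matrix whose only nonzero entries are $L^{(a)}_{2n+a-1,2m+a-1}=\binom nm$ for $n\ge m\ge0$. *)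

theory Defs
  imports "HOL-Analysis.Analysis" "HOL-Computational_Algebra.Polynomial"
begin

type_synonym cmat = "nat \<Rightarrow> nat \<Rightarrow> complex"

text \<open>Matrix product; all products occurring in the statement have finitely
  supported summands, so the (unconditional) infinite sum is a finite sum.\<close>
definition mmult :: "cmat \<Rightarrow> cmat \<Rightarrow> cmat" where
  "mmult A B = (\<lambda>i j. \<Sum>\<^sub>\<infinity>k. A i k * B k j)"

definition madd :: "cmat \<Rightarrow> cmat \<Rightarrow> cmat" where
  "madd A B = (\<lambda>i j. A i j + B i j)"

definition mtrans :: "cmat \<Rightarrow> cmat" where
  "mtrans A = (\<lambda>i j. A j i)"

definition mid :: cmat where
  "mid = (\<lambda>i j. if i = j then 1 else 0)"

definition mpow :: "cmat \<Rightarrow> nat \<Rightarrow> cmat" where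
  "mpow A n = ((mmult A) ^^ n) mid"

definition mpoly :: "complex poly \<Rightarrow> cmat \<Rightarrow> cmat" where
  "mpoly p A = (\<lambda>i j. \<Sum>k\<le>degree p. coeff p k * mpow A k i j)"

definition Lam :: cmat where
  "Lam = (\<lambda>i j. if j = Suc i then 1 else 0)"

text \<open>I^(1) = diag(1,0,1,0,...), I^(2) = diag(0,1,0,1,...); a \<in> {1,2}.\<close>
definition Iproj :: "nat \<Rightarrow> cmat" where
  "Iproj a = (\<lambda>i j. if i = j \<and> i mod 2 = a - 1 then 1 else 0)"

definition Lam_a :: "nat \<Rightarrow> cmat" where
  "Lam_a a = mmult (mpow Lam 2) (Iproj a)"

definition Pascal :: cmat where
  "Pascal = (\<lambda>n m. of_nat (n choose m))"

definition Pascal_a :: "nat \<Rightarrow> cmat" where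
  "Pascal_a a = (\<lambda>i j. if i mod 2 = a - 1 \<and> j mod 2 = a - 1
                        then of_nat ((i div 2) choose (j div 2)) else 0)"

definition X1 :: "complex \<Rightarrow> nat \<Rightarrow> complex" where
  "X1 x j = (if even j then x ^ (j div 2) else 0)"

definition X2 :: "complex \<Rightarrow> nat \<Rightarrow> complex" where
  "X2 x j = (if odd j then x ^ (j div 2) else 0)"

definition moment :: "(nat \<Rightarrow> complex) \<Rightarrow> (nat \<Rightarrow> complex) \<Rightarrow> cmat" where
  "moment w1 w2 = (\<lambda>i j. \<Sum>k. (of_nat k) ^ i *
       (w1 k * X1 (of_nat k) j + w2 k * X2 (of_nat k) j))"

end

theory Submission
  imports Defs
begin

(* Write the moment matrix as the series of rank-one matrices M = sum_k X(k) Y_k^T with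
   Y_k = w1(k) X1(k) + w2(k) X2(k). All matrices in the statement have finitely supported
   rows, so multiplying M by one of them on the left acts on the vectors X(k), and
   multiplying by the transpose of one on the right acts on the vectors Y_k.
   Now X(x) is an eigenvector of Lambda with eigenvalue x, X^(a)(x) is an eigenvector of
   Lambda^(a) with eigenvalue x and of Lambda^(b), b ~= a, with eigenvalue 0, while
   L^(a) maps X^(a)(x) to X^(a)(x+1) and annihilates X^(b)(x), and L maps X(x) to X(x+1).
   So the left-hand side is sum_k theta(k) X(k) Y_k^T and the right-hand side is
   sum_k X(k+1) (w1(k) sigma1(k) X1(k+1) + w2(k) sigma2(k) X2(k+1))^T, which by the Pearson
   equations is sum_k theta(k+1) X(k+1) Y_(k+1)^T: the left-hand side with the index shifted
   by one, the missing term k = 0 vanishing because theta(0) = 0. *)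

definition row_finite :: "cmat \<Rightarrow> bool" where
  "row_finite A \<longleftrightarrow> (\<forall>i. finite {k. A i k \<noteq> 0})"

definition mvec :: "cmat \<Rightarrow> (nat \<Rightarrow> complex) \<Rightarrow> nat \<Rightarrow> complex" where
  "mvec A v = (\<lambda>i. \<Sum>\<^sub>\<infinity>k. A i k * v k)"

lemma infsum_eq_sum_if_vanishes_outside:
  fixes f :: "'a \<Rightarrow> 'b::{comm_monoid_add, t2_space}"
  assumes "finite S" "\<And>k. k \<notin> S \<Longrightarrow> f k = 0"
  shows "(\<Sum>\<^sub>\<infinity>k. f k) = sum f S"
  using assms by (subst infsum_cong_neutral[where T = S and g = f]) auto

lemma mvec_eq_sum:
  assumes "finite S" "{k. A i k \<noteq> 0} \<subseteq> S"
  shows "mvec A v i = (\<Sum>k\<in>S. A i k * v k)"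
  unfolding mvec_def using assms by (intro infsum_eq_sum_if_vanishes_outside) auto

lemma mvec_eq_sum_row_support:
  assumes "row_finite A"
  shows "mvec A v i = (\<Sum>k | A i k \<noteq> 0. A i k * v k)"
  using assms unfolding row_finite_def by (intro mvec_eq_sum) auto

lemma mmult_eq_mvec: "mmult A B i j = mvec A (\<lambda>k. B k j) i"
  by (simp add: mmult_def mvec_def)

lemma mvec_scale: "mvec A (\<lambda>k. c * v k) = (\<lambda>i. c * mvec A v i)"
  by (simp add: mvec_def mult.left_commute infsum_cmult_right')

lemma mvec_add:
  assumes "row_finite A"
  shows "mvec A (\<lambda>k. u k + v k) = (\<lambda>i. mvec A u i + mvec A v i)"
  using assms by (intro ext) (simp add: mvec_eq_sum_row_support distrib_left sum.distrib)

lemma mmult_row_support: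
  assumes "row_finite A"
  shows "{l. mmult A B i l \<noteq> 0} \<subseteq> (\<Union>k\<in>{k. A i k \<noteq> 0}. {l. B k l \<noteq> 0})"
proof (rule subsetI, rule ccontr)
  fix l
  assume l: "l \<in> {l. mmult A B i l \<noteq> 0}" "l \<notin> (\<Union>k\<in>{k. A i k \<noteq> 0}. {l. B k l \<noteq> 0})"
  have "mmult A B i l = (\<Sum>k | A i k \<noteq> 0. A i k * B k l)"
    using assms by (simp add: mmult_eq_mvec mvec_eq_sum_row_support)
  also have "\<dots> = 0"
    using l(2) by (intro sum.neutral) auto
  finally show False
    using l(1) by simp
qed

lemma row_finite_mmult:
  assumes "row_finite A" "row_finite B"
  shows "row_finite (mmult A B)"
  unfolding row_finite_def
proof
  fix i
  show "finite {l. mmult A B i l \<noteq> 0}"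
    using assms by (intro finite_subset[OF mmult_row_support[OF assms(1)]] finite_UN_I)
      (auto simp: row_finite_def)
qed

lemma mvec_mmult:
  assumes "row_finite A" "row_finite B"
  shows "mvec (mmult A B) v = mvec A (mvec B v)"
proof
  fix i
  define S where "S = {k. A i k \<noteq> 0}"
  define U where "U = (\<Union>k\<in>S. {l. B k l \<noteq> 0})"
  have fin: "finite S" "finite U"
    using assms by (auto simp: S_def U_def row_finite_def)
  have "mvec (mmult A B) v i = (\<Sum>l\<in>U. mmult A B i l * v l)"
    using fin(2) mmult_row_support[OF assms(1)] by (intro mvec_eq_sum) (auto simp: S_def U_def)
  also have "\<dots> = (\<Sum>l\<in>U. (\<Sum>k\<in>S. A i k * B k l) * v l)"
    using assms(1) by (simp add: mmult_eq_mvec mvec_eq_sum_row_support S_def)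
  also have "\<dots> = (\<Sum>k\<in>S. A i k * (\<Sum>l\<in>U. B k l * v l))"
    unfolding sum_distrib_left sum_distrib_right mult.assoc by (rule sum.swap)
  also have "\<dots> = (\<Sum>k\<in>S. A i k * mvec B v k)"
    using fin by (intro sum.cong refl) (subst mvec_eq_sum[of U], auto simp: U_def)
  also have "\<dots> = mvec A (mvec B v) i"
    using fin by (simp add: mvec_eq_sum S_def)
  finally show "mvec (mmult A B) v i = mvec A (mvec B v) i" .
qed

lemma row_finite_madd:
  assumes "row_finite A" "row_finite B"
  shows "row_finite (madd A B)"
  unfolding row_finite_def
proof
  fix i
  have "{k. madd A B i k \<noteq> 0} \<subseteq> {k. A i k \<noteq> 0} \<union> {k. B i k \<noteq> 0}"
    by (auto simp: madd_def)
  then show "finite {k. madd A B i k \<noteq> 0}"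
    using assms by (auto simp: row_finite_def intro: finite_subset)
qed

lemma mvec_madd:
  assumes "row_finite A" "row_finite B"
  shows "mvec (madd A B) v = (\<lambda>i. mvec A v i + mvec B v i)"
proof
  fix i
  define S where "S = {k. A i k \<noteq> 0} \<union> {k. B i k \<noteq> 0}"
  have "finite S"
    using assms by (simp add: S_def row_finite_def)
  then show "mvec (madd A B) v i = mvec A v i + mvec B v i"
    by (subst (1 2 3) mvec_eq_sum[of S])
      (auto simp: S_def madd_def distrib_right sum.distrib)
qed

lemma row_finite_mid: "row_finite mid"
  by (simp add: row_finite_def mid_def)

lemma mvec_mid: "mvec mid v = v"
proof
  fix i
  show "mvec mid v i = v i"
    by (subst mvec_eq_sum[of "{i}"]) (auto simp: mid_def)
qed

lemma mpow_0: "mpow A 0 = mid"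
  by (simp add: mpow_def)

lemma mpow_Suc: "mpow A (Suc k) = mmult A (mpow A k)"
  by (simp add: mpow_def)

lemma row_finite_mpow: "row_finite A \<Longrightarrow> row_finite (mpow A k)"
  by (induction k) (simp_all add: mpow_0 mpow_Suc row_finite_mid row_finite_mmult)

lemma mpoly_row_support:
  "{j. mpoly p A i j \<noteq> 0} \<subseteq> (\<Union>k\<le>degree p. {j. mpow A k i j \<noteq> 0})"
proof (rule subsetI, rule ccontr)
  fix j
  assume j: "j \<in> {j. mpoly p A i j \<noteq> 0}" "j \<notin> (\<Union>k\<le>degree p. {j. mpow A k i j \<noteq> 0})"
  have "mpoly p A i j = 0"
    using j(2) unfolding mpoly_def by (intro sum.neutral) auto
  then show False
    using j(1) by simp
qed

lemma row_finite_mpoly: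
  assumes "row_finite A"
  shows "row_finite (mpoly p A)"
  unfolding row_finite_def
proof
  fix i
  show "finite {j. mpoly p A i j \<noteq> 0}"
    using row_finite_mpow[OF assms]
    by (intro finite_subset[OF mpoly_row_support] finite_UN_I) (auto simp: row_finite_def)
qed

lemma mvec_mpoly:
  assumes "row_finite A"
  shows "mvec (mpoly p A) v i = (\<Sum>k\<le>degree p. coeff p k * mvec (mpow A k) v i)"
proof -
  define U where "U = (\<Union>k\<le>degree p. {j. mpow A k i j \<noteq> 0})"
  have U: "finite U"
    using row_finite_mpow[OF assms] by (auto simp: U_def row_finite_def)
  have "mvec (mpoly p A) v i = (\<Sum>j\<in>U. (\<Sum>k\<le>degree p. coeff p k * mpow A k i j) * v j)"
    using U mpoly_row_support by (subst mvec_eq_sum[of U]) (auto simp: U_def mpoly_def)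
  also have "\<dots> = (\<Sum>k\<le>degree p. coeff p k * (\<Sum>j\<in>U. mpow A k i j * v j))"
    unfolding sum_distrib_left sum_distrib_right mult.assoc by (rule sum.swap)
  also have "\<dots> = (\<Sum>k\<le>degree p. coeff p k * mvec (mpow A k) v i)"
    using U by (intro sum.cong refl) (subst mvec_eq_sum[of U], auto simp: U_def)
  finally show ?thesis .
qed

lemma mvec_mpow_eigen:
  assumes "row_finite A" "mvec A v = (\<lambda>i. c * v i)"
  shows "mvec (mpow A k) v = (\<lambda>i. c ^ k * v i)"
proof (induction k)
  case 0
  show ?case
    by (simp add: mpow_0 mvec_mid)
next
  case (Suc k)
  show ?case
    using assms by (simp add: mpow_Suc mvec_mmult row_finite_mpow Suc.IH mvec_scale) (simp add: mult_ac)
qed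

lemma mvec_mpoly_eigen:
  assumes "row_finite A" "mvec A v = (\<lambda>i. c * v i)"
  shows "mvec (mpoly p A) v = (\<lambda>i. poly p c * v i)"
proof
  fix i
  show "mvec (mpoly p A) v i = poly p c * v i"
    using assms by (simp add: mvec_mpoly mvec_mpow_eigen poly_altdef sum_distrib_right mult.assoc)
qed

lemma row_finite_Lam: "row_finite Lam"
  by (simp add: row_finite_def Lam_def)

lemma mvec_Lam: "mvec Lam v = (\<lambda>i. v (Suc i))"
proof
  fix i
  show "mvec Lam v i = v (Suc i)"
    by (subst mvec_eq_sum[of "{Suc i}"]) (auto simp: Lam_def)
qed

lemma mvec_mpoly_Lam_powers: "mvec (mpoly p Lam) (\<lambda>k. x ^ k) = (\<lambda>i. poly p x * x ^ i)"
  by (rule mvec_mpoly_eigen) (simp_all add: row_finite_Lam mvec_Lam)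

lemma row_finite_Iproj: "row_finite (Iproj a)"
  by (simp add: row_finite_def Iproj_def)

lemma mvec_Iproj: "mvec (Iproj a) v = (\<lambda>i. if i mod 2 = a - 1 then v i else 0)"
proof
  fix i
  show "mvec (Iproj a) v i = (if i mod 2 = a - 1 then v i else 0)"
    by (subst mvec_eq_sum[of "{i}"]) (auto simp: Iproj_def)
qed

lemma row_finite_Lam_a: "row_finite (Lam_a a)"
  unfolding Lam_a_def by (intro row_finite_mmult row_finite_mpow row_finite_Lam row_finite_Iproj)

lemma mvec_Lam_a: "mvec (Lam_a a) v = (\<lambda>i. if i mod 2 = a - 1 then v (i + 2) else 0)"
proof -
  have "mvec (mpow Lam 2) u = (\<lambda>i. u (i + 2))" for u
    by (simp add: numeral_2_eq_2 mpow_Suc mpow_0 mvec_mmult mvec_mid mvec_Lam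
        row_finite_mmult row_finite_mid row_finite_Lam)
  then show ?thesis
    by (simp add: Lam_a_def mvec_mmult mvec_Iproj row_finite_mpow row_finite_Lam row_finite_Iproj)
      (simp add: add_2_eq_Suc' cong: if_cong)
qed

definition parity_powers :: "nat \<Rightarrow> complex \<Rightarrow> nat \<Rightarrow> complex" where
  "parity_powers e x j = (if j mod 2 = e then x ^ (j div 2) else 0)"

lemma mvec_Lam_a_parity_powers:
  "mvec (Lam_a a) (parity_powers e x) = (\<lambda>i. (if e = a - 1 then x else 0) * parity_powers e x i)"
  by (auto simp: mvec_Lam_a parity_powers_def)

lemma mvec_mpoly_Lam_a_parity_powers:
  "mvec (mpoly p (Lam_a a)) (parity_powers e x)
     = (\<lambda>i. poly p (if e = a - 1 then x else 0) * parity_powers e x i)"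
  by (intro mvec_mpoly_eigen row_finite_Lam_a mvec_Lam_a_parity_powers)

lemma row_finite_Pascal: "row_finite Pascal"
  unfolding row_finite_def
proof
  fix i
  show "finite {k. Pascal i k \<noteq> 0}"
    by (rule finite_subset[of _ "{..i}"]) (auto simp: Pascal_def)
qed

lemma mvec_Pascal_powers: "mvec Pascal (\<lambda>k. x ^ k) = (\<lambda>i. (x + 1) ^ i)"
proof
  fix i
  show "mvec Pascal (\<lambda>k. x ^ k) i = (x + 1) ^ i"
    by (subst mvec_eq_sum[of "{..i}"]) (auto simp: Pascal_def binomial_ring)
qed

lemma row_finite_Pascal_a: "row_finite (Pascal_a a)"
  unfolding row_finite_def
proof
  fix i
  show "finite {k. Pascal_a a i k \<noteq> 0}"
    by (rule finite_subset[of _ "{..Suc i}"]) (auto simp: Pascal_a_def)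
qed

lemma mvec_Pascal_a_parity_powers:
  "mvec (Pascal_a a) (parity_powers e x) = (\<lambda>i. if e = a - 1 then parity_powers e (x + 1) i else 0)"
proof
  fix i
  show "mvec (Pascal_a a) (parity_powers e x) i = (if e = a - 1 then parity_powers e (x + 1) i else 0)"
  proof (cases "i mod 2 = e \<and> e = a - 1")
    case True
    then have i: "i mod 2 = e" and a: "a - 1 = e"
      by auto
    have halve: "(2 * m + e) mod 2 = e" "(2 * m + e) div 2 = m" for m
      using i by auto
    define S where "S = (\<lambda>m. 2 * m + e) ` {..i div 2}"
    have "{j. Pascal_a a i j \<noteq> 0} \<subseteq> S"
    proof
      fix j
      assume "j \<in> {j. Pascal_a a i j \<noteq> 0}"
      then have "j mod 2 = e" "j div 2 \<le> i div 2"
        using i a by (auto simp: Pascal_a_def split: if_splits)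
      then show "j \<in> S"
        unfolding S_def by (intro image_eqI[of _ _ "j div 2"]) auto
    qed
    then have "mvec (Pascal_a a) (parity_powers e x) i = (\<Sum>j\<in>S. Pascal_a a i j * parity_powers e x j)"
      by (intro mvec_eq_sum) (simp_all add: S_def)
    also have "\<dots> = (\<Sum>m\<le>i div 2. of_nat (i div 2 choose m) * x ^ m)"
      using i a halve by (simp add: S_def sum.reindex inj_on_def Pascal_a_def parity_powers_def)
    also have "\<dots> = (x + 1) ^ (i div 2)"
      by (simp add: binomial_ring)
    finally show ?thesis
      using i a by (simp add: parity_powers_def)
  next
    case False
    then have vanish: "Pascal_a a i j * parity_powers e x j = 0" for j
      by (auto simp: Pascal_a_def parity_powers_def)
    have "mvec (Pascal_a a) (parity_powers e x) i = 0"
      unfolding mvec_def vanish by simp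
    then show ?thesis
      using False by (auto simp: parity_powers_def)
  qed
qed

lemma mvec_Pascal_a_mpoly_Lam_a_parity_powers:
  "mvec (mmult (Pascal_a a) (mpoly p (Lam_a a))) (parity_powers e x)
     = (\<lambda>i. if e = a - 1 then poly p x * parity_powers e (x + 1) i else 0)"
  by (simp add: mvec_mmult row_finite_Pascal_a row_finite_mpoly row_finite_Lam_a
      mvec_mpoly_Lam_a_parity_powers mvec_scale mvec_Pascal_a_parity_powers)

lemma X1_eq_parity_powers: "X1 = parity_powers 0"
  by (auto simp: fun_eq_iff X1_def parity_powers_def even_iff_mod_2_eq_zero)

lemma X2_eq_parity_powers: "X2 = parity_powers 1"
  by (auto simp: fun_eq_iff X2_def parity_powers_def odd_iff_mod_2_eq_one)

definition weighted_vector ::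
    "(nat \<Rightarrow> complex) \<Rightarrow> (nat \<Rightarrow> complex) \<Rightarrow> nat \<Rightarrow> nat \<Rightarrow> complex" where
  "weighted_vector w1 w2 k = (\<lambda>j. w1 k * X1 (of_nat k) j + w2 k * X2 (of_nat k) j)"

lemma weighted_vector_eq:
  "weighted_vector w1 w2 k j = (if even j then w1 k else w2 k) * of_nat k ^ (j div 2)"
  by (simp add: weighted_vector_def X1_def X2_def)

definition sigma_matrix :: "complex poly \<Rightarrow> complex poly \<Rightarrow> cmat" where
  "sigma_matrix \<sigma>1 \<sigma>2 = madd (mmult (Pascal_a 1) (mpoly \<sigma>1 (Lam_a 1)))
                                (mmult (Pascal_a 2) (mpoly \<sigma>2 (Lam_a 2)))"

lemma row_finite_sigma_matrix: "row_finite (sigma_matrix \<sigma>1 \<sigma>2)"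
  unfolding sigma_matrix_def
  by (intro row_finite_madd row_finite_mmult row_finite_Pascal_a row_finite_mpoly row_finite_Lam_a)

lemma mvec_sigma_matrix_weighted_vector:
  "mvec (sigma_matrix \<sigma>1 \<sigma>2) (weighted_vector w1 w2 k)
     = (\<lambda>j. w1 k * poly \<sigma>1 (of_nat k) * X1 (of_nat k + 1) j
           + w2 k * poly \<sigma>2 (of_nat k) * X2 (of_nat k + 1) j)"
proof -
  have lincomb: "mvec A (weighted_vector w1 w2 k)
      = (\<lambda>i. w1 k * mvec A (parity_powers 0 (of_nat k)) i
             + w2 k * mvec A (parity_powers 1 (of_nat k)) i)"
    if "row_finite A" for A
    using that
    by (simp add: weighted_vector_def X1_eq_parity_powers X2_eq_parity_powers mvec_add mvec_scale)
  show ?thesis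
    unfolding sigma_matrix_def
    by (simp add: mvec_madd lincomb mvec_Pascal_a_mpoly_Lam_a_parity_powers
        X1_eq_parity_powers X2_eq_parity_powers row_finite_mmult row_finite_Pascal_a
        row_finite_mpoly row_finite_Lam_a mult.assoc)
qed

lemma mvec_sigma_matrix_weighted_vector_Pearson:
  assumes "\<And>k. poly \<theta> (of_nat (Suc k)) * w1 (Suc k) = poly \<sigma>1 (of_nat k) * w1 k"
      and "\<And>k. poly \<theta> (of_nat (Suc k)) * w2 (Suc k) = poly \<sigma>2 (of_nat k) * w2 k"
  shows "mvec (sigma_matrix \<sigma>1 \<sigma>2) (weighted_vector w1 w2 k)
           = (\<lambda>j. poly \<theta> (of_nat (Suc k)) * weighted_vector w1 w2 (Suc k) j)"
proof -
  have "w1 k * poly \<sigma>1 (of_nat k) = poly \<theta> (of_nat (Suc k)) * w1 (Suc k)"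
       "w2 k * poly \<sigma>2 (of_nat k) = poly \<theta> (of_nat (Suc k)) * w2 (Suc k)"
       "of_nat k + 1 = (of_nat (Suc k) :: complex)"
    using assms by (simp_all add: mult.commute)
  then show ?thesis
    unfolding mvec_sigma_matrix_weighted_vector
    by (simp only:) (simp add: weighted_vector_def algebra_simps)
qed

definition finite_abs_moments :: "(nat \<Rightarrow> 'a::real_normed_field) \<Rightarrow> bool" where
  "finite_abs_moments w \<longleftrightarrow> (\<forall>n. summable (\<lambda>k. norm (of_nat k ^ n * w k)))"

lemma summable_poly_mult:
  fixes w :: "nat \<Rightarrow> 'a::{real_normed_field, banach}"
  assumes "finite_abs_moments w"
  shows "summable (\<lambda>k. poly p (of_nat k) * w k)"
proof -
  have "summable (\<lambda>k. of_nat k ^ n * w k)" for n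
    using assms unfolding finite_abs_moments_def by (blast intro: summable_norm_cancel)
  then have "summable (\<lambda>k. \<Sum>n\<le>degree p. coeff p n * (of_nat k ^ n * w k))"
    by (intro summable_sum summable_mult)
  then show ?thesis
    by (simp only: poly_altdef sum_distrib_right mult.assoc)
qed

lemma summable_poly_weighted_vector:
  assumes "finite_abs_moments w1" "finite_abs_moments w2"
  shows "summable (\<lambda>k. poly p (of_nat k) * weighted_vector w1 w2 k j)"
proof -
  have "finite_abs_moments (\<lambda>k. if even j then w1 k else w2 k)"
    using assms by (cases "even j") simp_all
  then have "summable (\<lambda>k. poly (p * monom 1 (j div 2)) (of_nat k) * (if even j then w1 k else w2 k))"
    by (rule summable_poly_mult)
  then show ?thesis
    by (simp add: weighted_vector_eq poly_monom mult_ac)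
qed

definition outer_series ::
    "(nat \<Rightarrow> nat \<Rightarrow> complex) \<Rightarrow> (nat \<Rightarrow> nat \<Rightarrow> complex) \<Rightarrow> cmat" where
  "outer_series u v = (\<lambda>i j. \<Sum>n. u n i * v n j)"

lemma infsum_mult_suminf_swap:
  fixes a :: "'a \<Rightarrow> 'b::real_normed_algebra"
  assumes "finite {k. a k \<noteq> 0}" "\<And>k. summable (F k)"
  shows "(\<Sum>\<^sub>\<infinity>k. a k * suminf (F k)) = (\<Sum>n. \<Sum>\<^sub>\<infinity>k. a k * F k n)"
proof -
  define S where "S = {k. a k \<noteq> 0}"
  have finsum: "(\<Sum>\<^sub>\<infinity>k. a k * g k) = (\<Sum>k\<in>S. a k * g k)" for g :: "'a \<Rightarrow> 'b"
    using assms(1) by (intro infsum_eq_sum_if_vanishes_outside) (auto simp: S_def)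
  have "(\<Sum>k\<in>S. a k * suminf (F k)) = (\<Sum>k\<in>S. \<Sum>n. a k * F k n)"
    using assms(2) by (simp add: suminf_mult)
  also have "\<dots> = (\<Sum>n. \<Sum>k\<in>S. a k * F k n)"
    using assms(2) by (intro suminf_sum[symmetric] summable_mult)
  finally show ?thesis
    by (simp only: finsum)
qed

lemma mmult_outer_series_left:
  assumes "row_finite A" "\<And>i j. summable (\<lambda>n. u n i * v n j)"
  shows "mmult A (outer_series u v) = outer_series (\<lambda>n. mvec A (u n)) v"
proof (intro ext)
  fix i j
  have "mmult A (outer_series u v) i j = (\<Sum>n. \<Sum>\<^sub>\<infinity>k. A i k * (u n k * v n j))"
    using assms unfolding mmult_def outer_series_def row_finite_def
    by (intro infsum_mult_suminf_swap) auto
  also have "\<dots> = (\<Sum>n. mvec A (u n) i * v n j)"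
    by (simp add: mvec_def mult.assoc[symmetric] infsum_cmult_left')
  finally show "mmult A (outer_series u v) i j = outer_series (\<lambda>n. mvec A (u n)) v i j"
    by (simp add: outer_series_def)
qed

lemma mmult_outer_series_right:
  assumes "row_finite B" "\<And>i j. summable (\<lambda>n. u n i * v n j)"
  shows "mmult (outer_series u v) (mtrans B) = outer_series u (\<lambda>n. mvec B (v n))"
proof (intro ext)
  fix i j
  have "mmult (outer_series u v) (mtrans B) i j = (\<Sum>\<^sub>\<infinity>k. B j k * (\<Sum>n. u n i * v n k))"
    by (simp add: mmult_def outer_series_def mtrans_def mult.commute)
  also have "\<dots> = (\<Sum>n. \<Sum>\<^sub>\<infinity>k. B j k * (u n i * v n k))"
    using assms unfolding row_finite_def by (intro infsum_mult_suminf_swap) auto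
  also have "\<dots> = (\<Sum>n. u n i * mvec B (v n) j)"
    by (simp only: mvec_def mult.left_commute[of "B j _"] infsum_cmult_right')
  finally show "mmult (outer_series u v) (mtrans B) i j = outer_series u (\<lambda>n. mvec B (v n)) i j"
    by (simp add: outer_series_def)
qed

lemma moment_eq_outer_series:
  "moment w1 w2 = outer_series (\<lambda>k i. of_nat k ^ i) (weighted_vector w1 w2)"
  by (simp add: moment_def outer_series_def weighted_vector_def)

lemma summable_moment_entry:
  assumes "finite_abs_moments w1" "finite_abs_moments w2"
  shows "summable (\<lambda>k. of_nat k ^ i * weighted_vector w1 w2 k j)"
  using summable_poly_weighted_vector[OF assms, of "monom 1 i"] by (simp add: poly_monom)

lemma mpoly_Lam_moment:
  assumes "finite_abs_moments w1" "finite_abs_moments w2"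
  shows "mmult (mpoly \<theta> Lam) (moment w1 w2)
           = outer_series (\<lambda>k i. poly \<theta> (of_nat k) * of_nat k ^ i) (weighted_vector w1 w2)"
  by (simp add: moment_eq_outer_series mmult_outer_series_left row_finite_mpoly row_finite_Lam
      mvec_mpoly_Lam_powers summable_moment_entry[OF assms])

lemma Pascal_moment_sigma_matrix:
  assumes "finite_abs_moments w1" "finite_abs_moments w2"
      and "\<And>k. poly \<theta> (of_nat (Suc k)) * w1 (Suc k) = poly \<sigma>1 (of_nat k) * w1 k"
      and "\<And>k. poly \<theta> (of_nat (Suc k)) * w2 (Suc k) = poly \<sigma>2 (of_nat k) * w2 k"
  shows "mmult Pascal (mmult (moment w1 w2) (mtrans (sigma_matrix \<sigma>1 \<sigma>2)))
           = outer_series (\<lambda>k i. (of_nat k + 1) ^ i)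
               (\<lambda>k j. poly \<theta> (of_nat (Suc k)) * weighted_vector w1 w2 (Suc k) j)"
proof -
  have shifted_summable:
    "summable (\<lambda>k. of_nat k ^ i * (poly \<theta> (of_nat (Suc k)) * weighted_vector w1 w2 (Suc k) j))"
    for i j
  proof -
    (* the polynomial (x - 1)^i theta(x), to be evaluated at x = k + 1 *)
    have "summable (\<lambda>k. poly ([:-1, 1:] ^ i * \<theta>) (of_nat k) * weighted_vector w1 w2 k j)"
      by (rule summable_poly_weighted_vector[OF assms(1,2)])
    then show ?thesis
      by (subst (asm) summable_Suc_iff[symmetric]) (simp add: poly_power mult.assoc)
  qed
  have "mmult (moment w1 w2) (mtrans (sigma_matrix \<sigma>1 \<sigma>2))
      = outer_series (\<lambda>k i. of_nat k ^ i)
          (\<lambda>k j. poly \<theta> (of_nat (Suc k)) * weighted_vector w1 w2 (Suc k) j)"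
    by (simp add: moment_eq_outer_series mmult_outer_series_right row_finite_sigma_matrix
        summable_moment_entry[OF assms(1,2)] mvec_sigma_matrix_weighted_vector_Pearson[OF assms(3,4)])
  then show ?thesis
    by (simp del: of_nat_Suc add: mmult_outer_series_left row_finite_Pascal mvec_Pascal_powers
        shifted_summable)
qed

lemma outer_series_index_shift:
  assumes "finite_abs_moments w1" "finite_abs_moments w2" "poly \<theta> 0 = 0"
  shows "outer_series (\<lambda>k i. (of_nat k + 1) ^ i)
           (\<lambda>k j. poly \<theta> (of_nat (Suc k)) * weighted_vector w1 w2 (Suc k) j)
         = outer_series (\<lambda>k i. poly \<theta> (of_nat k) * of_nat k ^ i) (weighted_vector w1 w2)"
proof (intro ext)
  fix i j
  define f where "f = (\<lambda>k. poly \<theta> (of_nat k) * of_nat k ^ i * weighted_vector w1 w2 k j)"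
  have "summable f"
    unfolding f_def using summable_poly_weighted_vector[OF assms(1,2), of "\<theta> * monom 1 i"]
    by (simp add: poly_monom)
  moreover have "f 0 = 0"
    using assms(3) by (simp add: f_def)
  ultimately have "(\<Sum>k. f (Suc k)) = suminf f"
    by (simp add: suminf_split_head)
  moreover have "outer_series (\<lambda>k i. (of_nat k + 1) ^ i)
      (\<lambda>k j. poly \<theta> (of_nat (Suc k)) * weighted_vector w1 w2 (Suc k) j) i j = (\<Sum>k. f (Suc k))"
    by (simp add: outer_series_def f_def mult_ac add.commute)
  moreover have "outer_series (\<lambda>k i. poly \<theta> (of_nat k) * of_nat k ^ i) (weighted_vector w1 w2) i j
      = suminf f"
    by (simp add: outer_series_def f_def)
  ultimately show "outer_series (\<lambda>k i. (of_nat k + 1) ^ i)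
      (\<lambda>k j. poly \<theta> (of_nat (Suc k)) * weighted_vector w1 w2 (Suc k) j) i j
    = outer_series (\<lambda>k i. poly \<theta> (of_nat k) * of_nat k ^ i) (weighted_vector w1 w2) i j"
    by simp
qed

theorem mainTheorem5:
  fixes w1 w2 :: "nat \<Rightarrow> complex" and \<theta> \<sigma>1 \<sigma>2 :: "complex poly"
  assumes abs1: "\<And>n. summable (\<lambda>k. norm ((of_nat k :: complex) ^ n * w1 k))"
      and abs2: "\<And>n. summable (\<lambda>k. norm ((of_nat k :: complex) ^ n * w2 k))"
      and pearson1: "\<And>k. poly \<theta> (of_nat (Suc k)) * w1 (Suc k) = poly \<sigma>1 (of_nat k) * w1 k"
      and pearson2: "\<And>k. poly \<theta> (of_nat (Suc k)) * w2 (Suc k) = poly \<sigma>2 (of_nat k) * w2 k"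
      and theta0: "poly \<theta> 0 = 0"
  shows "mmult (mpoly \<theta> Lam) (moment w1 w2) =
         mmult Pascal (mmult (moment w1 w2)
           (mtrans (madd (mmult (Pascal_a 1) (mpoly \<sigma>1 (Lam_a 1)))
                         (mmult (Pascal_a 2) (mpoly \<sigma>2 (Lam_a 2))))))"
proof -
  have moments: "finite_abs_moments w1" "finite_abs_moments w2"
    using abs1 abs2 by (simp_all add: finite_abs_moments_def)
  show ?thesis
    unfolding sigma_matrix_def[symmetric] mpoly_Lam_moment[OF moments]
      Pascal_moment_sigma_matrix[OF moments pearson1 pearson2] outer_series_index_shift[OF moments theta0]
    ..
qed

end
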